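(* Let $k\ge3$ be an integer and let $a>0$ and $\alpha>0$ be real numbers. W.h.p. over the choice of $\Phi=\Phi(k,n,\lfloor\alpha n\rfloor)$, for every set of clauses $Y$ with $|Y|\ge a\log n$, we have $|\mathrm{var}(Y)|\ge a\log n$.
   Context: The random $k$-CNF formula $\Phi(k,n,m)$ is uniform over $k$-CNF formulas with $n$ variables and $m$ clauses of $k$ literals each (repetitions allowed); w.h.p. means with probability $1-o(1)$ as $n\to\infty$. For a set of clauses $Y$, $\mathrm{var}(Y)$ is the set of variables appearing in some clause of $Y$. *)

theory Defs
  imports "HOL-Probability.Probability"
begin

text \<open>A literal is a pair (variable, sign) with variables from {0..<n}.  Repetitions are allowed.\<close>

type_synonym literal = "nat \<times> bool"
type_synonym clause = "nat \<Rightarrow> literal"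
type_synonym formula = "nat \<Rightarrow> clause"

definition kcnf_formulas :: "nat \<Rightarrow> nat \<Rightarrow> nat \<Rightarrow> formula set" where
  "kcnf_formulas k n m =
     PiE {0..<m} (\<lambda>_. PiE {0..<k} (\<lambda>_. {0..<n} \<times> (UNIV :: bool set)))"

definition random_kcnf :: "nat \<Rightarrow> nat \<Rightarrow> nat \<Rightarrow> formula pmf" where
  "random_kcnf k n m = pmf_of_set (kcnf_formulas k n m)"

definition var :: "nat \<Rightarrow> formula \<Rightarrow> nat set \<Rightarrow> nat set" where
  "var k \<Phi> Y = {fst (\<Phi> i j) | i j. i \<in> Y \<and> j < k}"

end

theory Submission
  imports Defs "HOL-Real_Asymp.Real_Asymp"
begin

text \<open>If some set of at least \<open>s\<close> clauses spans fewer than \<open>s\<close> variables, then some set \<open>Y\<close> of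
  exactly \<open>s\<close> clauses has all its variables in a set \<open>T\<close> of exactly \<open>s - 1\<close> variables.
  For fixed \<open>Y\<close> and \<open>T\<close> this has probability \<open>((s - 1) / n)^(k s)\<close>, so a union bound over the
  \<open>(m choose s) (n choose (s - 1))\<close> pairs bounds the failure probability by \<open>(\<alpha> s\<^sup>3 / n)^s / n\<close>
  when \<open>m \<le> \<alpha> n\<close> and \<open>k \<ge> 3\<close>.  For \<open>s = \<lceil>a ln n\<rceil>\<close> eventually \<open>\<alpha> s\<^sup>3 \<le> n\<close>, so the failure
  probability is at most \<open>1 / n\<close>.\<close>

definition kcnf_confined :: "nat \<Rightarrow> nat \<Rightarrow> nat \<Rightarrow> nat set \<Rightarrow> nat set \<Rightarrow> formula set" where
  "kcnf_confined k n m Y T =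
     PiE {0..<m} (\<lambda>i. PiE {0..<k} (\<lambda>_. (if i \<in> Y then T else {0..<n}) \<times> (UNIV :: bool set)))"

definition sparse_event :: "nat \<Rightarrow> nat \<Rightarrow> nat \<Rightarrow> formula set" where
  "sparse_event k m s = {\<Phi>. \<exists>Y \<subseteq> {0..<m}. s \<le> card Y \<and> card (var k \<Phi> Y) < s}"

lemma finite_kcnf_formulas: "finite (kcnf_formulas k n m)"
  unfolding kcnf_formulas_def by (intro finite_PiE) auto

lemma kcnf_formulas_nonempty: "n > 0 \<Longrightarrow> kcnf_formulas k n m \<noteq> {}"
  unfolding kcnf_formulas_def by (auto simp: PiE_eq_empty_iff)

lemma set_pmf_random_kcnf: "n > 0 \<Longrightarrow> set_pmf (random_kcnf k n m) = kcnf_formulas k n m"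
  unfolding random_kcnf_def by (simp add: finite_kcnf_formulas kcnf_formulas_nonempty)

lemma card_kcnf_formulas: "card (kcnf_formulas k n m) = (2 * n) ^ (k * m)"
  unfolding kcnf_formulas_def
  by (simp add: card_PiE card_cartesian_product power_mult mult.commute)

lemma kcnf_confined_subset: "T \<subseteq> {0..<n} \<Longrightarrow> kcnf_confined k n m Y T \<subseteq> kcnf_formulas k n m"
  unfolding kcnf_confined_def kcnf_formulas_def by (intro PiE_mono) auto

lemma card_kcnf_confined:
  assumes "Y \<subseteq> {0..<m}"
  shows "card (kcnf_confined k n m Y T) = (2 * card T) ^ (k * card Y) * (2 * n) ^ (k * (m - card Y))"
proof -
  have "card (kcnf_confined k n m Y T) = (\<Prod>i\<in>{0..<m}. (2 * card (if i \<in> Y then T else {0..<n})) ^ k)"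
    unfolding kcnf_confined_def by (simp add: card_PiE card_cartesian_product mult.commute)
  also have "\<dots> = (\<Prod>i\<in>{0..<m}. (if i \<in> Y then (2 * card T) ^ k else (2 * n) ^ k))"
    by (intro prod.cong) auto
  also have "\<dots> = (2 * card T) ^ (k * card Y) * (2 * n) ^ (k * (m - card Y))"
    using assms finite_subset[OF assms]
    by (simp add: prod.If_cases Int_absorb1 Diff_eq[symmetric] card_Diff_subset power_mult)
  finally show ?thesis .
qed

lemma prob_kcnf_confined:
  assumes "Y \<subseteq> {0..<m}" "T \<subseteq> {0..<n}" "n > 0"
  shows "measure_pmf.prob (random_kcnf k n m) (kcnf_confined k n m Y T)
           = (card T / n) ^ (k * card Y)"
proof -
  let ?e = "k * card Y" and ?f = "k * (m - card Y)"
  have "card Y \<le> m"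
    using card_mono[OF _ assms(1)] by simp
  then have "k * m = ?e + ?f"
    by (simp add: diff_mult_distrib2)
  then have "card (kcnf_formulas k n m) = (2 * n) ^ ?e * (2 * n) ^ ?f"
    by (simp only: card_kcnf_formulas power_add)
  moreover have "card (kcnf_confined k n m Y T) = (2 * card T) ^ ?e * (2 * n) ^ ?f"
    using card_kcnf_confined[OF assms(1)] .
  ultimately have "card (kcnf_confined k n m Y T) / card (kcnf_formulas k n m)
                     = real ((2 * card T) ^ ?e) / real ((2 * n) ^ ?e)"
    using assms(3) by (simp del: of_nat_power of_nat_mult add: of_nat_mult)
  also have "\<dots> = (card T / n) ^ ?e"
    by (simp add: power_divide)
  finally show ?thesis
    unfolding random_kcnf_def
    using kcnf_confined_subset[OF assms(2)] kcnf_formulas_nonempty[OF assms(3)]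
    by (simp add: measure_pmf_of_set finite_kcnf_formulas Int_absorb1)
qed

lemma var_subset_atLeastLessThan:
  assumes "\<Phi> \<in> kcnf_formulas k n m" "Y \<subseteq> {0..<m}"
  shows "var k \<Phi> Y \<subseteq> {0..<n}"
  using assms unfolding var_def kcnf_formulas_def by (auto simp: PiE_iff mem_Times_iff)

lemma var_mono: "Y \<subseteq> Y' \<Longrightarrow> var k \<Phi> Y \<subseteq> var k \<Phi> Y'"
  unfolding var_def by blast

lemma in_kcnf_confinedI:
  assumes "\<Phi> \<in> kcnf_formulas k n m" "var k \<Phi> Y \<subseteq> T"
  shows "\<Phi> \<in> kcnf_confined k n m Y T"
proof -
  have "fst (\<Phi> i j) \<in> T" if "i \<in> Y" "j < k" for i j
    using assms(2) that unfolding var_def by blast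
  then show ?thesis
    using assms(1) unfolding kcnf_formulas_def kcnf_confined_def by (auto simp: PiE_iff mem_Times_iff)
qed

lemma sparse_event_covered:
  assumes "\<Phi> \<in> kcnf_formulas k n m \<inter> sparse_event k m s" "s \<le> Suc n"
  obtains Y T where "Y \<subseteq> {0..<m}" "card Y = s" "T \<subseteq> {0..<n}" "card T = s - 1"
    "\<Phi> \<in> kcnf_confined k n m Y T"
proof -
  from assms(1) obtain Y0 where \<Phi>: "\<Phi> \<in> kcnf_formulas k n m"
    and Y0: "Y0 \<subseteq> {0..<m}" "s \<le> card Y0" "card (var k \<Phi> Y0) < s"
    unfolding sparse_event_def by blast
  obtain Y where Y: "Y \<subseteq> Y0" "card Y = s"
    using obtain_subset_with_card_n[OF Y0(2)] by metis
  have "card (var k \<Phi> Y) \<le> card (var k \<Phi> Y0)"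
    using var_subset_atLeastLessThan[OF \<Phi> Y0(1)] var_mono[OF Y(1)]
    by (intro card_mono) (auto intro: finite_subset)
  then obtain T where "var k \<Phi> Y \<subseteq> T" "T \<subseteq> {0..<n}" "card T = s - 1"
    using exists_subset_between[of "var k \<Phi> Y" "s - 1" "{0..<n}"] Y0 Y(1) assms(2)
      var_subset_atLeastLessThan[OF \<Phi>, of Y]
    by fastforce
  then show ?thesis
    using that Y Y0(1) in_kcnf_confinedI[OF \<Phi>] by blast
qed

lemma prob_sparse_event_le:
  assumes "n > 0" "s \<le> Suc n"
  shows "measure_pmf.prob (random_kcnf k n m) (sparse_event k m s)
           \<le> real (m choose s) * real (n choose (s - 1)) * (real (s - 1) / n) ^ (k * s)"
proof -
  let ?p = "random_kcnf k n m"
  define Ys where "Ys = {Y. Y \<subseteq> {0..<m} \<and> card Y = s}"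
  define Ts where "Ts = {T. T \<subseteq> {0..<n} \<and> card T = s - 1}"
  have finite: "finite (Ys \<times> Ts)"
    unfolding Ys_def Ts_def by (intro finite_cartesian_product) (auto intro: finite_subset)
  have "sparse_event k m s \<inter> set_pmf ?p \<subseteq> (\<Union>(Y, T)\<in>Ys \<times> Ts. kcnf_confined k n m Y T)"
  proof
    fix \<Phi> assume "\<Phi> \<in> sparse_event k m s \<inter> set_pmf ?p"
    then have "\<Phi> \<in> kcnf_formulas k n m \<inter> sparse_event k m s"
      using set_pmf_random_kcnf[OF assms(1)] by blast
    then obtain Y T where "Y \<subseteq> {0..<m}" "card Y = s" "T \<subseteq> {0..<n}" "card T = s - 1"
      "\<Phi> \<in> kcnf_confined k n m Y T"
      by (rule sparse_event_covered[OF _ assms(2)])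
    then show "\<Phi> \<in> (\<Union>(Y, T)\<in>Ys \<times> Ts. kcnf_confined k n m Y T)"
      unfolding Ys_def Ts_def by (intro UN_I[of "(Y, T)"]) auto
  qed
  then have "measure_pmf.prob ?p (sparse_event k m s)
               \<le> measure_pmf.prob ?p (\<Union>(Y, T)\<in>Ys \<times> Ts. kcnf_confined k n m Y T)"
    by (metis measure_Int_set_pmf measure_pmf.finite_measure_mono sets_measure_pmf UNIV_I)
  also have "\<dots> \<le> (\<Sum>(Y, T)\<in>Ys \<times> Ts. measure_pmf.prob ?p (kcnf_confined k n m Y T))"
    using measure_UNION_le[OF finite, where F = "case_prod (kcnf_confined k n m)" and M = ?p]
    by (simp add: case_prod_unfold)
  also have "\<dots> = (\<Sum>(Y, T)\<in>Ys \<times> Ts. (real (s - 1) / n) ^ (k * s))"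
    using assms(1)
    by (intro sum.cong) (auto simp: Ys_def Ts_def prob_kcnf_confined)
  also have "\<dots> = real (card Ys) * real (card Ts) * (real (s - 1) / n) ^ (k * s)"
    by (simp add: card_cartesian_product)
  also have "card Ys = m choose s"
    unfolding Ys_def using n_subsets[of "{0..<m}"] by simp
  also have "card Ts = n choose (s - 1)"
    unfolding Ts_def using n_subsets[of "{0..<n}"] by simp
  finally show ?thesis .
qed

lemma real_binomial_le_power: "real (n choose r) \<le> real n ^ r"
  by (cases "r \<le> n") (simp_all add: binomial_le_pow binomial_eq_0 flip: of_nat_power)

lemma union_bound_le_inverse:
  fixes \<alpha> :: real
  assumes "n > 0" "1 \<le> s" "s \<le> n" "3 \<le> k" "real m \<le> \<alpha> * n" "\<alpha> * real s ^ 3 \<le> n"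
  shows "real (m choose s) * real (n choose (s - 1)) * (real (s - 1) / n) ^ (k * s) \<le> 1 / n"
proof -
  have "\<alpha> \<ge> 0"
    using assms(1,5) by (smt (verit) of_nat_0_le_iff of_nat_0_less_iff mult_neg_pos)
  have ratio: "0 \<le> real s / n" "real s / n \<le> 1"
    using assms(1,3) by auto
  have "real (m choose s) * real (n choose (s - 1)) * (real (s - 1) / n) ^ (k * s)
          \<le> (\<alpha> * n) ^ s * real n ^ (s - 1) * (real s / n) ^ (3 * s)"
  proof (intro mult_mono)
    show "real (m choose s) \<le> (\<alpha> * n) ^ s"
      using real_binomial_le_power assms(5) by (rule order_trans[OF _ power_mono]) simp
    show "real (n choose (s - 1)) \<le> real n ^ (s - 1)"
      by (rule real_binomial_le_power)
    have "(real (s - 1) / n) ^ (k * s) \<le> (real s / n) ^ (k * s)"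
      using assms(1,2) by (intro power_mono divide_right_mono) auto
    also have "\<dots> \<le> (real s / n) ^ (3 * s)"
      using ratio assms(4) by (intro power_decreasing) auto
    finally show "(real (s - 1) / n) ^ (k * s) \<le> (real s / n) ^ (3 * s)" .
  qed (use \<open>\<alpha> \<ge> 0\<close> in auto)
  also have "\<dots> = (\<alpha> * real s ^ 3 / n) ^ s / n"
  proof -
    have "real n ^ (s - 1) = real n ^ s / n"
      using assms(1,2) by (simp add: power_diff)
    moreover have "(real s / n) ^ (3 * s) = ((real s / n) ^ 3) ^ s"
      by (simp add: power_mult)
    moreover have "\<alpha> * n * n * (real s / n) ^ 3 = \<alpha> * real s ^ 3 / n"
      using assms(1) by (simp add: power3_eq_cube field_simps)
    moreover have "(\<alpha> * n) ^ s * (real n ^ s / n) * ((real s / n) ^ 3) ^ s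
                     = (\<alpha> * n * n * (real s / n) ^ 3) ^ s / n"
      by (simp only: power_mult_distrib) (simp add: algebra_simps)
    ultimately show ?thesis
      by simp
  qed
  also have "\<dots> \<le> 1 / n"
    using assms(1,6) \<open>\<alpha> \<ge> 0\<close> by (intro divide_right_mono power_le_one) auto
  finally show ?thesis .
qed

lemma spread_event_eq_Compl_sparse_event:
  "{\<Phi>. \<forall>Y \<subseteq> {0..<m}. c \<le> real (card Y) \<longrightarrow> c \<le> real (card (var k \<Phi> Y))}
     = - sparse_event k m (nat \<lceil>c\<rceil>)"
  unfolding sparse_event_def by (auto simp: not_less zless_nat_eq_int_zless less_ceiling_iff)

lemma eventually_log_size_parameters:
  fixes a \<alpha> :: real
  assumes "a > 0" "\<alpha> > 0"
  shows "eventually (\<lambda>n. let s = nat \<lceil>a * ln (real n)\<rceil> in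
           1 \<le> s \<and> s \<le> n \<and> \<alpha> * real s ^ 3 \<le> n) sequentially"
proof -
  have "eventually (\<lambda>n::nat. 0 < a * ln (real n)) sequentially"
    "eventually (\<lambda>n::nat. a * ln (real n) + 1 \<le> real n) sequentially"
    "eventually (\<lambda>n::nat. \<alpha> * (a * ln (real n) + 1) ^ 3 \<le> real n) sequentially"
    using assms by real_asymp+
  then show ?thesis
  proof eventually_elim
    case (elim n)
    define s where "s = nat \<lceil>a * ln (real n)\<rceil>"
    have "1 \<le> s" "real s \<le> a * ln (real n) + 1"
      using elim(1) unfolding s_def by linarith+
    moreover have "\<alpha> * real s ^ 3 \<le> \<alpha> * (a * ln (real n) + 1) ^ 3"
      using assms(2) \<open>real s \<le> _\<close> by (intro mult_left_mono power_mono) auto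
    ultimately show ?case
      using elim unfolding s_def[symmetric] Let_def by linarith
  qed
qed

lemma eventually_prob_sparse_event_le_inverse:
  fixes a \<alpha> :: real
  assumes "k \<ge> 3" "a > 0" "\<alpha> > 0"
  shows "eventually (\<lambda>n. measure_pmf.prob (random_kcnf k n (nat \<lfloor>\<alpha> * real n\<rfloor>))
           (sparse_event k (nat \<lfloor>\<alpha> * real n\<rfloor>) (nat \<lceil>a * ln (real n)\<rceil>)) \<le> 1 / n) sequentially"
  using eventually_log_size_parameters[OF assms(2,3)]
proof (rule eventually_mono)
  fix n :: nat
  define m where "m = nat \<lfloor>\<alpha> * real n\<rfloor>"
  define s where "s = nat \<lceil>a * ln (real n)\<rceil>"
  assume "let s = nat \<lceil>a * ln (real n)\<rceil> in 1 \<le> s \<and> s \<le> n \<and> \<alpha> * real s ^ 3 \<le> n"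
  then have "1 \<le> s" "s \<le> n" "\<alpha> * real s ^ 3 \<le> n"
    unfolding s_def Let_def by auto
  moreover have "real m \<le> \<alpha> * n"
    unfolding m_def using assms(3) by simp
  ultimately show "measure_pmf.prob (random_kcnf k n m) (sparse_event k m s) \<le> 1 / n"
    using prob_sparse_event_le[of n s k m] union_bound_le_inverse[of n s k m \<alpha>] assms(1)
    by force
qed

lemma measure_pmf_prob_Compl: "measure_pmf.prob p (- A) = 1 - measure_pmf.prob p A"
  using measure_pmf.prob_compl[of A p] by (simp add: Compl_eq_Diff_UNIV)

theorem lemma6p2:
  fixes k :: nat and a \<alpha> :: real
  assumes "k \<ge> 3" and "a > 0" and "\<alpha> > 0"
  shows "(\<lambda>n. measure_pmf.prob (random_kcnf k n (nat \<lfloor>\<alpha> * real n\<rfloor>))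
            {\<Phi>. \<forall>Y \<subseteq> {0..<nat \<lfloor>\<alpha> * real n\<rfloor>}.
                   real (card Y) \<ge> a * ln (real n) \<longrightarrow>
                   real (card (var k \<Phi> Y)) \<ge> a * ln (real n)})
         \<longlonglongrightarrow> 1"
proof -
  define q where "q n = measure_pmf.prob (random_kcnf k n (nat \<lfloor>\<alpha> * real n\<rfloor>))
                          (sparse_event k (nat \<lfloor>\<alpha> * real n\<rfloor>) (nat \<lceil>a * ln (real n)\<rceil>))" for n
  have "(\<lambda>n. 1 / real n) \<longlonglongrightarrow> 0"
    by real_asymp
  then have "q \<longlonglongrightarrow> 0"
    using eventually_prob_sparse_event_le_inverse[OF assms] unfolding q_def[symmetric]
    by (intro tendsto_sandwich[of "\<lambda>_. 0" q _ "\<lambda>n. 1 / real n"]) (auto simp: q_def)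
  then have "(\<lambda>n. 1 - q n) \<longlonglongrightarrow> 1"
    using tendsto_diff[of "\<lambda>_. 1" 1 _ q 0] by simp
  then show ?thesis
    by (simp add: q_def spread_event_eq_Compl_sparse_event measure_pmf_prob_Compl)
qed

end
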